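(* Let $D^k$ be a vertically mapped wedge with $J^k>0$. Define the weak differentiation matrices $(\bm S^k_x)_{ij,i'j'}=\int_{\widehat W}\frac{\partial\phi_{i'j'}}{\partial x}\,\ell_{ij}\,J^k$ and $(\bm S^k_y)_{ij,i'j'}=\int_{\widehat W}\frac{\partial\phi_{i'j'}}{\partial y}\,\ell_{ij}\,J^k$, where $\phi_{i'j'}=\ell_{i'j'}\circ(\bm\Phi^k)^{-1}$ and the $x$-,$y$-derivatives are expressed via the chain rule in reference coordinates, and let $\bm D^k_x=(\bm M^k)^{-1}\bm S^k_x$, $\bm D^k_y=(\bm M^k)^{-1}\bm S^k_y$. Then $$\bm D^k_x=\big(r_x\bm D^{\mathrm{tri}}_r+s_x\bm D^{\mathrm{tri}}_s\big)\otimes\bm I_{N+1}+\bm L^{\mathrm{tri},k}\otimes\mathrm{diag}(t_xJ^k)\,\bm D^{\mathrm{1D}}_t,$$ $$\bm D^k_y=\big(r_y\bm D^{\mathrm{tri}}_r+s_y\bm D^{\mathrm{tri}}_s\big)\otimes\bm I_{N+1}+\bm L^{\mathrm{tri},k}\otimes\mathrm{diag}(t_yJ^k)\,\bm D^{\mathrm{1D}}_t,$$ where $r_x,s_x,r_y,s_y$ are the (constant) geometric factors of $D^k$, $\mathrm{diag}(t_xJ^k)$ (resp. $\mathrm{diag}(t_yJ^k)$) is the $(N+1)\times(N+1)$ diagonal matrix with entries $(t_xJ^k)(t_j)$ (resp. $(t_yJ^k)(t_j)$), $j=0,\dots,N$ (these quantities depend only on $t$), and $\bm L^{\mathrm{tri},k}=(\bm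 M^{\mathrm{tri},k})^{-1}\widehat{\bm M}^{\mathrm{tri}}$.
   Context: Reference wedge $\widehat W=\widehat T\times[0,1]$ with $\widehat T=\{(r,s):r,s\ge0,\ r+s\le1\}$. Vertex functions $v_1=(1-r-s)(1-t)$, $v_2=r(1-t)$, $v_3=s(1-t)$, $v_4=(1-r-s)t$, $v_5=rt$, $v_6=st$; a wedge $D^k$ is the image of $\widehat W$ under $\bm{\Phi}^k=\sum_{i=1}^6\bm{\nu}_iv_i$ with vertices $\bm{\nu}_i\in\mathbb{R}^3$, $(x,y,z)=\bm\Phi^k(r,s,t)$, and $J^k=\det[\partial_r\bm{\Phi}^k,\partial_s\bm{\Phi}^k,\partial_t\bm{\Phi}^k]$. It is vertically mapped if the pairs $(\bm{\nu}_1,\bm{\nu}_4)$, $(\bm{\nu}_2,\bm{\nu}_5)$, $(\bm{\nu}_3,\bm{\nu}_6)$ each have identical $x$- and $y$-coordinates. Geometric factors $r_x=\partial r/\partial x$, $t_x=\partial t/\partial x$, etc., are entries of the inverse Jacobian matrix of $\bm\Phi^k$. Nodal basis: fix $N\ge1$, points $(r_i,s_i)$, $i=1,\dots,(N+1)(N+2)/2$, in $\widehat T$ unisolvent for polynomials of total degree $\le N$ with Lagrange basis $\ell^{\mathrm{tri}}_i$, and Gauss–Legendre–Lobatto points $0=t_0<\dots<t_N=1$ with Lagrange basis $\ell^{\mathrm{1D}}_j$; $\ell_{ij}=\ell^{\mathrm{tri}}_i(r,s)\ell^{\mathrm{1D}}_j(t)$. Matrices indexed by $(i,j)$ are ordered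 with $i$ the slow index, so $(\bm A\otimes\bm B)_{ij,i'j'}=\bm A_{ii'}\bm B_{jj'}$. Definitions: $(\bm M^k)_{ij,i'j'}=\int_{\widehat W}\ell_{ij}\ell_{i'j'}J^k$; $(\bm M^{\mathrm{tri},k})_{ii'}=\int_{\widehat T}\ell^{\mathrm{tri}}_i\ell^{\mathrm{tri}}_{i'}J^k(r,s)$ (where $J^k$ is independent of $t$ for vertically mapped wedges); $(\widehat{\bm M}^{\mathrm{tri}})_{ii'}=\int_{\widehat T}\ell^{\mathrm{tri}}_i\ell^{\mathrm{tri}}_{i'}$; nodal differentiation matrices $(\bm D^{\mathrm{tri}}_r)_{ii'}=\partial_r\ell^{\mathrm{tri}}_{i'}(r_i,s_i)$, $(\bm D^{\mathrm{tri}}_s)_{ii'}=\partial_s\ell^{\mathrm{tri}}_{i'}(r_i,s_i)$, $(\bm D^{\mathrm{1D}}_t)_{jj'}=(\ell^{\mathrm{1D}}_{j'})'(t_j)$; $\bm I_{N+1}$ is the $(N+1)\times(N+1)$ identity. *)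

theory Defs
  imports "HOL-Analysis.Analysis" "HOL-Computational_Algebra.Polynomial"
begin

definition mmul :: "nat \<Rightarrow> (nat \<Rightarrow> nat \<Rightarrow> real) \<Rightarrow> (nat \<Rightarrow> nat \<Rightarrow> real) \<Rightarrow> nat \<Rightarrow> nat \<Rightarrow> real" where
  "mmul n A B = (\<lambda>a b. \<Sum>c<n. A a c * B c b)"

definition idm :: "nat \<Rightarrow> nat \<Rightarrow> real" where
  "idm a b = (if a = b then 1 else 0)"

definition diagm :: "(nat \<Rightarrow> real) \<Rightarrow> nat \<Rightarrow> nat \<Rightarrow> real" where
  "diagm d a b = (if a = b then d a else 0)"

text \<open>Inverse of an n x n matrix (entries outside the n x n block are set to 0).\<close>
definition minv :: "nat \<Rightarrow> (nat \<Rightarrow> nat \<Rightarrow> real) \<Rightarrow> nat \<Rightarrow> nat \<Rightarrow> real" where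
  "minv n A = (THE B. (\<forall>a b. (n \<le> a \<or> n \<le> b) \<longrightarrow> B a b = 0)
      \<and> (\<forall>a<n. \<forall>b<n. mmul n B A a b = idm a b)
      \<and> (\<forall>a<n. \<forall>b<n. mmul n A B a b = idm a b))"

text \<open>Kronecker product, the second factor being q x q; index (i,j) is flattened as i*q+j
  (i the slow index).\<close>
definition kron :: "nat \<Rightarrow> (nat \<Rightarrow> nat \<Rightarrow> real) \<Rightarrow> (nat \<Rightarrow> nat \<Rightarrow> real) \<Rightarrow> nat \<Rightarrow> nat \<Rightarrow> real" where
  "kron q A B = (\<lambda>a b. A (a div q) (b div q) * B (a mod q) (b mod q))"

definition ref_tri :: "(real \<times> real) set" where
  "ref_tri = {(r, s). 0 \<le> r \<and> 0 \<le> s \<and> r + s \<le> 1}"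

definition ref_wedge :: "(real \<times> real \<times> real) set" where
  "ref_wedge = {(r, s, t). 0 \<le> r \<and> 0 \<le> s \<and> r + s \<le> 1 \<and> 0 \<le> t \<and> t \<le> 1}"

definition Np :: "nat \<Rightarrow> nat" where
  "Np N = (N + 1) * (N + 2) div 2"

definition tri_poly :: "nat \<Rightarrow> (real \<times> real \<Rightarrow> real) set" where
  "tri_poly N = {f. \<exists>c :: nat \<Rightarrow> nat \<Rightarrow> real.
      \<forall>r s. f (r, s) = (\<Sum>a\<le>N. \<Sum>b\<le>N - a. c a b * r ^ a * s ^ b)}"

definition unisolvent :: "nat \<Rightarrow> (nat \<Rightarrow> real \<times> real) \<Rightarrow> bool" where
  "unisolvent N p = (\<forall>d :: nat \<Rightarrow> real.
      \<exists>!f. f \<in> tri_poly N \<and> (\<forall>m<Np N. f (p m) = d m))"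

definition lagr_tri :: "nat \<Rightarrow> (nat \<Rightarrow> real \<times> real) \<Rightarrow> nat \<Rightarrow> real \<times> real \<Rightarrow> real" where
  "lagr_tri N p i = (THE f. f \<in> tri_poly N \<and> (\<forall>m<Np N. f (p m) = (if m = i then 1 else 0)))"

text \<open>Shifted Legendre setting: GLL points on [0,1] are 0, 1 and the roots of the derivative
  of the degree-N Legendre polynomial on [0,1], which is proportional to
  (d/dt)^N (t^2 - t)^N (Rodrigues).\<close>
definition gll_interior_poly :: "nat \<Rightarrow> real poly" where
  "gll_interior_poly N = pderiv ((pderiv ^^ N) ([:0, -1, 1:] ^ N))"

definition gll_nodes :: "nat \<Rightarrow> (nat \<Rightarrow> real) \<Rightarrow> bool" where
  "gll_nodes N t = (t 0 = 0 \<and> t N = 1 \<and> strict_mono_on {0..N} t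
      \<and> (\<forall>j. 0 < j \<and> j < N \<longrightarrow> poly (gll_interior_poly N) (t j) = 0))"

definition lagr_1d :: "nat \<Rightarrow> (nat \<Rightarrow> real) \<Rightarrow> nat \<Rightarrow> real \<Rightarrow> real" where
  "lagr_1d N t j = (\<lambda>x. \<Prod>m\<in>{0..N} - {j}. (x - t m) / (t j - t m))"

definition ell :: "nat \<Rightarrow> (nat \<Rightarrow> real \<times> real) \<Rightarrow> (nat \<Rightarrow> real) \<Rightarrow> nat \<Rightarrow> real \<Rightarrow> real \<Rightarrow> real \<Rightarrow> real" where
  "ell N p t a r s u = lagr_tri N p (a div (N + 1)) (r, s) * lagr_1d N t (a mod (N + 1)) u"

definition pd_r :: "(real \<Rightarrow> real \<Rightarrow> real \<Rightarrow> real) \<Rightarrow> real \<Rightarrow> real \<Rightarrow> real \<Rightarrow> real" where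
  "pd_r f r s t = deriv (\<lambda>x. f x s t) r"
definition pd_s :: "(real \<Rightarrow> real \<Rightarrow> real \<Rightarrow> real) \<Rightarrow> real \<Rightarrow> real \<Rightarrow> real \<Rightarrow> real" where
  "pd_s f r s t = deriv (\<lambda>x. f r x t) s"
definition pd_t :: "(real \<Rightarrow> real \<Rightarrow> real \<Rightarrow> real) \<Rightarrow> real \<Rightarrow> real \<Rightarrow> real \<Rightarrow> real" where
  "pd_t f r s t = deriv (\<lambda>x. f r s x) t"

definition vfun :: "nat \<Rightarrow> real \<Rightarrow> real \<Rightarrow> real \<Rightarrow> real" where
  "vfun i r s t =
     (if i = 1 then (1 - r - s) * (1 - t)
      else if i = 2 then r * (1 - t)
      else if i = 3 then s * (1 - t)
      else if i = 4 then (1 - r - s) * t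
      else if i = 5 then r * t
      else if i = 6 then s * t else 0)"

text \<open>One coordinate of the map Phi, given that coordinate of the six vertices.\<close>
definition Phi_c :: "(nat \<Rightarrow> real) \<Rightarrow> real \<Rightarrow> real \<Rightarrow> real \<Rightarrow> real" where
  "Phi_c c r s t = (\<Sum>i=1..6. c i * vfun i r s t)"

definition vertically_mapped :: "(nat \<Rightarrow> real) \<Rightarrow> (nat \<Rightarrow> real) \<Rightarrow> bool" where
  "vertically_mapped vx vy = (vx 1 = vx 4 \<and> vy 1 = vy 4 \<and> vx 2 = vx 5 \<and> vy 2 = vy 5
      \<and> vx 3 = vx 6 \<and> vy 3 = vy 6)"

definition jac_mat :: "(nat \<Rightarrow> real) \<Rightarrow> (nat \<Rightarrow> real) \<Rightarrow> (nat \<Rightarrow> real) \<Rightarrow> real \<Rightarrow> real \<Rightarrow> real \<Rightarrow> real^3^3" where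
  "jac_mat vx vy vz r s t = vector
     [vector [pd_r (Phi_c vx) r s t, pd_s (Phi_c vx) r s t, pd_t (Phi_c vx) r s t],
      vector [pd_r (Phi_c vy) r s t, pd_s (Phi_c vy) r s t, pd_t (Phi_c vy) r s t],
      vector [pd_r (Phi_c vz) r s t, pd_s (Phi_c vz) r s t, pd_t (Phi_c vz) r s t]]"

definition Jac :: "(nat \<Rightarrow> real) \<Rightarrow> (nat \<Rightarrow> real) \<Rightarrow> (nat \<Rightarrow> real) \<Rightarrow> real \<Rightarrow> real \<Rightarrow> real \<Rightarrow> real" where
  "Jac vx vy vz r s t = det (jac_mat vx vy vz r s t)"

text \<open>Geometric factors = entries of the inverse Jacobian matrix (rows r,s,t; columns x,y,z).\<close>
definition geo_rx where "geo_rx vx vy vz r s t = matrix_inv (jac_mat vx vy vz r s t) $ 1 $ 1"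
definition geo_ry where "geo_ry vx vy vz r s t = matrix_inv (jac_mat vx vy vz r s t) $ 1 $ 2"
definition geo_sx where "geo_sx vx vy vz r s t = matrix_inv (jac_mat vx vy vz r s t) $ 2 $ 1"
definition geo_sy where "geo_sy vx vy vz r s t = matrix_inv (jac_mat vx vy vz r s t) $ 2 $ 2"
definition geo_tx where "geo_tx vx vy vz r s t = matrix_inv (jac_mat vx vy vz r s t) $ 3 $ 1"
definition geo_ty where "geo_ty vx vy vz r s t = matrix_inv (jac_mat vx vy vz r s t) $ 3 $ 2"

definition mass_k where
  "mass_k N p t vx vy vz a b = integral ref_wedge
     (\<lambda>(r, s, u). ell N p t a r s u * ell N p t b r s u * Jac vx vy vz r s u)"

text \<open>J is independent of t for vertically mapped wedges; we evaluate it at t = 0.\<close>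
definition mass_tri_k where
  "mass_tri_k N p vx vy vz i i' = integral ref_tri
     (\<lambda>(r, s). lagr_tri N p i (r, s) * lagr_tri N p i' (r, s) * Jac vx vy vz r s 0)"

definition mass_tri_ref where
  "mass_tri_ref N p i i' = integral ref_tri
     (\<lambda>(r, s). lagr_tri N p i (r, s) * lagr_tri N p i' (r, s))"

definition Dr_tri where
  "Dr_tri N p i i' = deriv (\<lambda>x. lagr_tri N p i' (x, snd (p i))) (fst (p i))"
definition Ds_tri where
  "Ds_tri N p i i' = deriv (\<lambda>x. lagr_tri N p i' (fst (p i), x)) (snd (p i))"
definition Dt_1d where
  "Dt_1d N t j j' = deriv (lagr_1d N t j') (t j)"

definition Sx_k where
  "Sx_k N p t vx vy vz a b = integral ref_wedge
     (\<lambda>(r, s, u). (geo_rx vx vy vz r s u * pd_r (ell N p t b) r s u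
                 + geo_sx vx vy vz r s u * pd_s (ell N p t b) r s u
                 + geo_tx vx vy vz r s u * pd_t (ell N p t b) r s u)
                * ell N p t a r s u * Jac vx vy vz r s u)"

definition Sy_k where
  "Sy_k N p t vx vy vz a b = integral ref_wedge
     (\<lambda>(r, s, u). (geo_ry vx vy vz r s u * pd_r (ell N p t b) r s u
                 + geo_sy vx vy vz r s u * pd_s (ell N p t b) r s u
                 + geo_ty vx vy vz r s u * pd_t (ell N p t b) r s u)
                * ell N p t a r s u * Jac vx vy vz r s u)"

end

theory Submission
  imports Defs "Jordan_Normal_Form.Determinant"
begin

text \<open>For a vertically mapped wedge the Jacobian matrix of \<open>\<Phi>\<close> is block lower triangular,
  with a constant upper \<open>2 \<times> 2\<close> block and last column \<open>(0, 0, z\<^sub>t)\<close>, where \<open>z\<^sub>t\<close> is affine in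
  \<open>(r, s)\<close> and independent of \<open>t\<close>.  Hence \<open>J\<close> does not depend on \<open>t\<close>, the factors \<open>r\<^sub>x\<close>, \<open>s\<^sub>x\<close>,
  \<open>r\<^sub>y\<close>, \<open>s\<^sub>y\<close> are constant, and \<open>t\<^sub>x J\<close>, \<open>t\<^sub>y J\<close> are affine in \<open>t\<close>.

  As the mass matrix \<open>M\<close> is an invertible Gram matrix, it suffices to show \<open>S = M X\<close> for the
  claimed matrix \<open>X\<close>.  The sum of \<open>\<ell>\<^sub>c X\<^sub>c\<^sub>b\<close> over \<open>c\<close> is an interpolant: nodal interpolation on
  the triangle reproduces the \<open>r\<close>- and \<open>s\<close>-derivatives of the triangle basis, and GLL
  interpolation reproduces \<open>t\<^sub>x J\<close> times the derivative of a one-dimensional basis function, a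
  polynomial of degree at most \<open>N\<close>.  This accounts for the horizontal part of \<open>S\<close>.  In the
  vertical part of \<open>S\<close> the factor \<open>J\<close> is absorbed into \<open>t\<^sub>x J\<close>, so once the wedge integral is split
  into a triangle integral times an interval integral, its triangle factor is the reference mass
  matrix; the corresponding factor of \<open>M X\<close> is \<open>M\<^sup>t\<^sup>r\<^sup>i L\<close>, which is that same matrix.\<close>

section \<open>Matrices indexed by natural numbers\<close>

lemma mmul_assoc: "mmul n A (mmul n B C) a b = mmul n (mmul n A B) C a b"
proof -
  have "mmul n A (mmul n B C) a b = (\<Sum>c<n. \<Sum>d<n. A a c * B c d * C d b)"
    unfolding mmul_def by (simp add: sum_distrib_left mult.assoc)
  also have "\<dots> = (\<Sum>d<n. \<Sum>c<n. A a c * B c d * C d b)" by (rule sum.swap)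
  also have "\<dots> = mmul n (mmul n A B) C a b"
    unfolding mmul_def by (simp add: sum_distrib_right)
  finally show ?thesis .
qed

lemma sum_idm_left: "a < n \<Longrightarrow> (\<Sum>c<n. idm a c * f c) = (f a :: real)"
  by (simp add: idm_def if_distrib[where f="\<lambda>x. x * _"] cong: if_cong)

lemma sum_idm_right: "b < n \<Longrightarrow> (\<Sum>c<n. f c * idm c b) = (f b :: real)"
  by (simp add: idm_def if_distrib[where f="\<lambda>x. _ * x"] cong: if_cong)

lemma mmul_diagm_left: "a < n \<Longrightarrow> mmul n (diagm d) B a b = d a * B a b"
  by (simp add: mmul_def diagm_def if_distrib[where f="\<lambda>x. x * _"] cong: if_cong)

lemma sum_lessThan_mult_split:
  fixes P q :: nat
  shows "(\<Sum>c<P * q. h c) = (\<Sum>i<P. \<Sum>j<q. h (i * q + j))"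
proof -
  have "(\<Sum>j<q. h (i * q + j)) = sum h {i * q..<i * q + q}" for i
    using sum.shift_bounds_nat_ivl[where g=h and m=0 and k="i * q" and n=q]
    by (simp add: atLeast0LessThan add.commute)
  then show ?thesis by (simp add: sum.nat_group[symmetric])
qed

lemma flat_index_div_mod:
  fixes q :: nat
  assumes "j < q"
  shows "(i * q + j) div q = i" and "(i * q + j) mod q = j"
  using assms by auto

definition is_minv :: "nat \<Rightarrow> (nat \<Rightarrow> nat \<Rightarrow> real) \<Rightarrow> (nat \<Rightarrow> nat \<Rightarrow> real) \<Rightarrow> bool" where
  "is_minv n A B \<longleftrightarrow> (\<forall>a b. (n \<le> a \<or> n \<le> b) \<longrightarrow> B a b = 0)
      \<and> (\<forall>a<n. \<forall>b<n. mmul n B A a b = idm a b)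
      \<and> (\<forall>a<n. \<forall>b<n. mmul n A B a b = idm a b)"

lemma mmul_is_minv_left:
  assumes "is_minv n A B" "a < n"
  shows "mmul n (mmul n B A) C a b = C a b"
proof -
  have "mmul n (mmul n B A) C a b = (\<Sum>c<n. idm a c * C c b)"
    unfolding mmul_def[of n "mmul n B A"] using assms by (intro sum.cong) (auto simp: is_minv_def)
  also have "\<dots> = C a b" using assms(2) by (rule sum_idm_left)
  finally show ?thesis .
qed

lemma mmul_is_minv_right:
  assumes "is_minv n A B" "a < n"
  shows "mmul n (mmul n A B) C a b = C a b"
proof -
  have "mmul n (mmul n A B) C a b = (\<Sum>c<n. idm a c * C c b)"
    unfolding mmul_def[of n "mmul n A B"] using assms by (intro sum.cong) (auto simp: is_minv_def)
  also have "\<dots> = C a b" using assms(2) by (rule sum_idm_left)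
  finally show ?thesis .
qed

lemma is_minv_unique:
  assumes B1: "is_minv n A B1" and B2: "is_minv n A B2"
  shows "B1 = B2"
proof (intro ext)
  fix a b
  show "B1 a b = B2 a b"
  proof (cases "a < n \<and> b < n")
    case True
    have "B1 a b = mmul n B1 (mmul n A B2) a b"
      unfolding mmul_def[of n B1] using B2 True by (auto simp: is_minv_def sum_idm_right)
    also have "\<dots> = mmul n (mmul n B1 A) B2 a b" by (rule mmul_assoc)
    also have "\<dots> = B2 a b" using True by (intro mmul_is_minv_left[OF B1]) simp
    finally show ?thesis .
  next
    case False
    then show ?thesis using B1 B2 unfolding is_minv_def by auto
  qed
qed

lemma is_minv_minv: "is_minv n A B \<Longrightarrow> is_minv n A (minv n A)"
proof -
  assume "is_minv n A B"
  then have "\<exists>!B. is_minv n A B" using is_minv_unique by blast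
  then show ?thesis unfolding minv_def is_minv_def[symmetric] by (rule theI')
qed

lemma ex_is_minv_if_kernel_trivial:
  assumes inj: "\<And>v. \<forall>a<n. (\<Sum>b<n. A a b * v b) = 0 \<Longrightarrow> \<forall>b<n. v b = 0"
  shows "\<exists>B. is_minv n A B"
proof -
  define A' where "A' = Matrix.mat n n (\<lambda>(i, j). A i j)"
  have A'c: "A' \<in> carrier_mat n n" by (simp add: A'_def)
  have "Determinant.det A' \<noteq> 0"
  proof
    assume "Determinant.det A' = 0"
    then obtain v where v: "v \<in> carrier_vec n" "v \<noteq> 0\<^sub>v n" "A' *\<^sub>v v = 0\<^sub>v n"
      using det_0_iff_vec_prod_zero[OF A'c] by blast
    have "(\<Sum>b<n. A a b * vec_index v b) = 0" if a: "a < n" for a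
    proof -
      have "vec_index (A' *\<^sub>v v) a = 0" using v(3) a by simp
      then show ?thesis using a v(1)
        by (simp add: A'_def scalar_prod_def Matrix.row_def lessThan_atLeast0)
    qed
    then have "\<forall>b<n. vec_index v b = 0" using inj[of "vec_index v"] by blast
    then have "v = 0\<^sub>v n" using v(1) by (intro eq_vecI) auto
    then show False using v(2) by simp
  qed
  then have "A' \<in> Units (ring_mat TYPE(real) n ())" by (rule det_non_zero_imp_unit[OF A'c])
  then obtain B' where B': "B' \<in> carrier_mat n n" "B' * A' = 1\<^sub>m n" "A' * B' = 1\<^sub>m n"
    unfolding Units_def by (auto simp: ring_mat_def)
  define B where "B a b = (if a < n \<and> b < n then B' $$ (a, b) else 0)" for a b
  have entry: "mmul n B A a b = (B' * A') $$ (a, b)" "mmul n A B a b = (A' * B') $$ (a, b)"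
    if "a < n" "b < n" for a b
    using that B'(1)
    by (simp_all add: mmul_def B_def A'_def scalar_prod_def Matrix.row_def Matrix.col_def
        lessThan_atLeast0)
  have "is_minv n A B"
    unfolding is_minv_def using B'(2,3) by (auto simp: B_def entry idm_def)
  then show ?thesis by blast
qed

section \<open>Geometry of vertically mapped wedges\<close>

lemma matrix_inv_eqI:
  fixes A :: "real^'n^'n"
  assumes "A ** B = Finite_Cartesian_Product.mat 1" "B ** A = Finite_Cartesian_Product.mat 1"
  shows "matrix_inv A = B"
proof -
  have "A ** matrix_inv A = Finite_Cartesian_Product.mat 1
      \<and> matrix_inv A ** A = Finite_Cartesian_Product.mat 1"
    unfolding matrix_inv_def by (rule someI[of _ B]) (use assms in blast)
  then have "matrix_inv A = matrix_inv A ** (A ** B)"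
    and "matrix_inv A ** A = Finite_Cartesian_Product.mat 1"
    using assms by (simp_all add: matrix_mul_rid)
  then show ?thesis by (simp add: matrix_mul_assoc matrix_mul_lid)
qed

lemma matrix_inv_block_lower_3:
  fixes a b c d e f g :: real
  assumes D: "D = a * d - b * c" "D \<noteq> 0" and g: "g \<noteq> 0"
  shows "matrix_inv (vector [vector [a, b, 0], vector [c, d, 0], vector [e, f, g]] :: real^3^3)
    = vector [vector [d / D, - b / D, 0], vector [- c / D, a / D, 0],
              vector [(c * f - d * e) / (D * g), (b * e - a * f) / (D * g), 1 / g]]"
  apply (rule matrix_inv_eqI)
  using D g apply (auto simp: matrix_matrix_mult_def vec_eq_iff fun_eq_iff forall_3 sum_3
      Finite_Cartesian_Product.mat_def field_simps)
  by (simp_all add: D(1) algebra_simps)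

lemma Phi_c_eq:
  "Phi_c c r s t = c 1 * ((1 - r - s) * (1 - t)) + c 2 * (r * (1 - t)) + c 3 * (s * (1 - t))
     + c 4 * ((1 - r - s) * t) + c 5 * (r * t) + c 6 * (s * t)"
  by (simp add: Phi_c_def vfun_def eval_nat_numeral atLeastAtMostSuc_conv)

lemma pd_r_Phi_c: "pd_r (Phi_c c) r s t = (c 2 - c 1) * (1 - t) + (c 5 - c 4) * t"
  unfolding pd_r_def Phi_c_eq
  by (rule DERIV_imp_deriv) (auto intro!: derivative_eq_intros simp: algebra_simps)

lemma pd_s_Phi_c: "pd_s (Phi_c c) r s t = (c 3 - c 1) * (1 - t) + (c 6 - c 4) * t"
  unfolding pd_s_def Phi_c_eq
  by (rule DERIV_imp_deriv) (auto intro!: derivative_eq_intros simp: algebra_simps)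

lemma pd_t_Phi_c:
  "pd_t (Phi_c c) r s t = (c 4 - c 1) * (1 - r - s) + (c 5 - c 2) * r + (c 6 - c 3) * s"
  unfolding pd_t_def Phi_c_eq
  by (rule DERIV_imp_deriv) (auto intro!: derivative_eq_intros simp: algebra_simps)

definition jac_xy :: "(nat \<Rightarrow> real) \<Rightarrow> (nat \<Rightarrow> real) \<Rightarrow> real" where
  "jac_xy vx vy = (vx 2 - vx 1) * (vy 3 - vy 1) - (vx 3 - vx 1) * (vy 2 - vy 1)"

lemma jac_mat_vertically_mapped:
  assumes "vertically_mapped vx vy"
  shows "jac_mat vx vy vz r s t = vector [vector [vx 2 - vx 1, vx 3 - vx 1, 0],
     vector [vy 2 - vy 1, vy 3 - vy 1, 0],
     vector [pd_r (Phi_c vz) r s t, pd_s (Phi_c vz) r s t, pd_t (Phi_c vz) r s t]]"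
  using assms unfolding jac_mat_def pd_r_Phi_c pd_s_Phi_c pd_t_Phi_c vertically_mapped_def
  by (simp add: algebra_simps)

lemma Jac_vertically_mapped:
  assumes "vertically_mapped vx vy"
  shows "Jac vx vy vz r s t = jac_xy vx vy * pd_t (Phi_c vz) r s t"
  unfolding Jac_def jac_mat_vertically_mapped[OF assms] det_3 jac_xy_def by (simp add: algebra_simps)

lemma Jac_vertically_mapped_indep_t:
  "vertically_mapped vx vy \<Longrightarrow> Jac vx vy vz r s t = Jac vx vy vz r s 0"
  by (simp add: Jac_vertically_mapped pd_t_Phi_c)

lemma continuous_on_Jac_vertically_mapped:
  "vertically_mapped vx vy \<Longrightarrow> continuous_on S r \<Longrightarrow> continuous_on S s
    \<Longrightarrow> continuous_on S (\<lambda>x. Jac vx vy vz (r x) (s x) (u x))"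
  unfolding Jac_vertically_mapped pd_t_Phi_c by (intro continuous_intros; assumption)+

lemma geo_factors_vertically_mapped:
  assumes vm: "vertically_mapped vx vy"
    and D: "jac_xy vx vy \<noteq> 0" and G: "pd_t (Phi_c vz) r s t \<noteq> 0"
  shows "geo_rx vx vy vz r s t = (vy 3 - vy 1) / jac_xy vx vy"
    "geo_ry vx vy vz r s t = - (vx 3 - vx 1) / jac_xy vx vy"
    "geo_sx vx vy vz r s t = - (vy 2 - vy 1) / jac_xy vx vy"
    "geo_sy vx vy vz r s t = (vx 2 - vx 1) / jac_xy vx vy"
    "geo_tx vx vy vz r s t * Jac vx vy vz r s t
       = (vy 2 - vy 1) * pd_s (Phi_c vz) r s t - (vy 3 - vy 1) * pd_r (Phi_c vz) r s t"
    "geo_ty vx vy vz r s t * Jac vx vy vz r s t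
       = (vx 3 - vx 1) * pd_r (Phi_c vz) r s t - (vx 2 - vx 1) * pd_s (Phi_c vz) r s t"
  using D G unfolding geo_rx_def geo_ry_def geo_sx_def geo_sy_def geo_tx_def geo_ty_def
    Jac_vertically_mapped[OF vm] jac_mat_vertically_mapped[OF vm]
    matrix_inv_block_lower_3[OF jac_xy_def D G]
  by (simp_all add: jac_xy_def)

section \<open>Polynomials on the reference triangle\<close>

definition tri_coeffs :: "nat \<Rightarrow> (real \<times> real \<Rightarrow> real) \<Rightarrow> (nat \<Rightarrow> nat \<Rightarrow> real) \<Rightarrow> bool" where
  "tri_coeffs N f c \<longleftrightarrow> (\<forall>a b. N < a + b \<longrightarrow> c a b = 0) \<and>
     (\<forall>r s. f (r, s) = (\<Sum>a\<le>N. \<Sum>b\<le>N. c a b * r ^ a * s ^ b))"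

lemma tri_poly_iff_tri_coeffs: "f \<in> tri_poly N \<longleftrightarrow> (\<exists>c. tri_coeffs N f c)"
proof
  assume "f \<in> tri_poly N"
  then obtain c where c: "\<And>r s. f (r, s) = (\<Sum>a\<le>N. \<Sum>b\<le>N - a. c a b * r ^ a * s ^ b)"
    unfolding tri_poly_def by blast
  define c' where "c' a b = (if a + b \<le> N then c a b else 0)" for a b
  have "(\<Sum>b\<le>N - a. c a b * r ^ a * s ^ b) = (\<Sum>b\<le>N. c' a b * r ^ a * s ^ b)" if "a \<le> N" for a r s
  proof -
    have "(\<Sum>b\<le>N. c' a b * r ^ a * s ^ b) = (\<Sum>b\<le>N - a. c' a b * r ^ a * s ^ b)"
      by (rule sum.mono_neutral_right) (auto simp: c'_def)
    also have "\<dots> = (\<Sum>b\<le>N - a. c a b * r ^ a * s ^ b)"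
      using that by (intro sum.cong) (auto simp: c'_def)
    finally show ?thesis by simp
  qed
  then have "tri_coeffs N f c'" unfolding tri_coeffs_def using c by (auto simp: c'_def intro!: sum.cong)
  then show "\<exists>c. tri_coeffs N f c" by blast
next
  assume "\<exists>c. tri_coeffs N f c"
  then obtain c where c: "tri_coeffs N f c" by blast
  have "(\<Sum>b\<le>N - a. c a b * r ^ a * s ^ b) = (\<Sum>b\<le>N. c a b * r ^ a * s ^ b)" if "a \<le> N" for a r s
    by (rule sum.mono_neutral_left) (use c in \<open>auto simp: tri_coeffs_def\<close>)
  then have "f (r, s) = (\<Sum>a\<le>N. \<Sum>b\<le>N - a. c a b * r ^ a * s ^ b)" for r s
    using c unfolding tri_coeffs_def by (auto intro!: sum.cong)
  then show "f \<in> tri_poly N" unfolding tri_poly_def by blast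
qed

lemma tri_poly_sum:
  assumes "finite I" "\<And>i. i \<in> I \<Longrightarrow> f i \<in> tri_poly N"
  shows "(\<lambda>x. \<Sum>i\<in>I. w i * f i x) \<in> tri_poly N"
  using assms
proof (induction I rule: finite_induct)
  case empty
  have "tri_coeffs N (\<lambda>x. 0) (\<lambda>a b. 0)" by (simp add: tri_coeffs_def)
  then show ?case unfolding tri_poly_iff_tri_coeffs by auto
next
  case (insert i I)
  have "f i \<in> tri_poly N" "(\<lambda>x. \<Sum>i\<in>I. w i * f i x) \<in> tri_poly N"
    using insert by auto
  then obtain c d where "tri_coeffs N (f i) c" "tri_coeffs N (\<lambda>x. \<Sum>i\<in>I. w i * f i x) d"
    unfolding tri_poly_iff_tri_coeffs by blast
  then have "tri_coeffs N (\<lambda>x. \<Sum>i\<in>insert i I. w i * f i x) (\<lambda>a b. w i * c a b + d a b)"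
    using insert(1,2) unfolding tri_coeffs_def by (simp add: sum.distrib sum_distrib_left algebra_simps)
  then show ?case unfolding tri_poly_iff_tri_coeffs by blast
qed

lemma tri_poly_swap:
  assumes "f \<in> tri_poly N"
  shows "(\<lambda>x. f (snd x, fst x)) \<in> tri_poly N"
proof -
  obtain c where "tri_coeffs N f c"
    using assms unfolding tri_poly_iff_tri_coeffs by blast
  then have "tri_coeffs N (\<lambda>x. f (snd x, fst x)) (\<lambda>a b. c b a)"
    unfolding tri_coeffs_def by (auto simp: add.commute) (subst sum.swap, simp add: algebra_simps)
  then show ?thesis unfolding tri_poly_iff_tri_coeffs by blast
qed

lemma tri_poly_has_derivative_r:
  assumes "f \<in> tri_poly N"
  obtains f' where "f' \<in> tri_poly N"
    "\<And>r s. ((\<lambda>x. f (x, s)) has_real_derivative f' (r, s)) (at r)"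
proof -
  obtain c where c: "tri_coeffs N f c" using assms unfolding tri_poly_iff_tri_coeffs by blast
  then have c0: "\<And>a b. N < a + b \<Longrightarrow> c a b = 0" by (simp add: tri_coeffs_def)
  define f' where "f' x = (\<Sum>a\<le>N. \<Sum>b\<le>N. c a b * (real a * fst x ^ (a - 1)) * snd x ^ b)" for x
  have "(\<Sum>a\<le>N. \<Sum>b\<le>N. real (Suc a) * c (Suc a) b * x ^ a * s ^ b) = f' (x, s)" for x s
  proof -
    define g where "g a = (\<Sum>b\<le>N. c a b * (real a * x ^ (a - 1)) * s ^ b)" for a
    have "(\<Sum>a\<le>Suc N. g a) = g 0 + (\<Sum>a\<le>N. g (Suc a))" by (rule sum.atMost_Suc_shift)
    moreover have "g 0 = 0" "g (Suc N) = 0" by (simp_all add: g_def c0)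
    ultimately have "(\<Sum>a\<le>N. g (Suc a)) = (\<Sum>a\<le>N. g a)" by simp
    then show ?thesis by (simp add: g_def f'_def algebra_simps)
  qed
  then have "tri_coeffs N f' (\<lambda>a b. real (Suc a) * c (Suc a) b)"
    using c0 by (auto simp: tri_coeffs_def)
  moreover have "((\<lambda>x. f (x, s)) has_real_derivative f' (r, s)) (at r)" for r s
  proof -
    have "(\<lambda>x. f (x, s)) = (\<lambda>x. \<Sum>a\<le>N. \<Sum>b\<le>N. c a b * x ^ a * s ^ b)"
      using c by (simp add: tri_coeffs_def)
    then show ?thesis unfolding f'_def
      by (auto intro!: derivative_eq_intros sum.cong simp: mult_ac)
  qed
  ultimately show ?thesis using that unfolding tri_poly_iff_tri_coeffs by blast
qed

lemma tri_poly_has_derivative_s: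
  assumes "f \<in> tri_poly N"
  obtains f' where "f' \<in> tri_poly N"
    "\<And>r s. ((\<lambda>x. f (r, x)) has_real_derivative f' (r, s)) (at s)"
proof -
  obtain g where g: "g \<in> tri_poly N" "\<And>r s. ((\<lambda>x. f (s, x)) has_real_derivative g (r, s)) (at r)"
    using tri_poly_has_derivative_r[OF tri_poly_swap[OF assms]] by auto
  show ?thesis
    by (rule that[of "\<lambda>x. g (snd x, fst x)"]) (use tri_poly_swap[OF g(1)] g(2) in auto)
qed
lemma continuous_on_tri_poly: "f \<in> tri_poly N \<Longrightarrow> continuous_on S f"
proof -
  assume "f \<in> tri_poly N"
  then obtain c where "tri_coeffs N f c" unfolding tri_poly_iff_tri_coeffs by blast
  then have f_eq: "f = (\<lambda>x. \<Sum>a\<le>N. \<Sum>b\<le>N. c a b * fst x ^ a * snd x ^ b)"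
    by (auto simp: tri_coeffs_def fun_eq_iff)
  show ?thesis unfolding f_eq by (intro continuous_intros)
qed

lemma lagr_tri_in_tri_poly: "unisolvent N p \<Longrightarrow> lagr_tri N p i \<in> tri_poly N"
  and lagr_tri_nodal:
    "unisolvent N p \<Longrightarrow> m < Np N \<Longrightarrow> lagr_tri N p i (p m) = (if m = i then 1 else 0)"
proof -
  assume "unisolvent N p"
  then have "\<exists>!f. f \<in> tri_poly N \<and> (\<forall>m<Np N. f (p m) = (if m = i then 1 else 0))"
    unfolding unisolvent_def by (rule spec)
  then have "lagr_tri N p i \<in> tri_poly N
      \<and> (\<forall>m<Np N. lagr_tri N p i (p m) = (if m = i then 1 else 0))"
    unfolding lagr_tri_def by (rule theI')
  then show "lagr_tri N p i \<in> tri_poly N"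
    and "m < Np N \<Longrightarrow> lagr_tri N p i (p m) = (if m = i then 1 else 0)"
    by blast+
qed

lemma tri_poly_interpolation:
  assumes uni: "unisolvent N p" and f: "f \<in> tri_poly N"
  shows "f x = (\<Sum>i<Np N. f (p i) * lagr_tri N p i x)"
proof -
  define g where "g = (\<lambda>x. \<Sum>i<Np N. f (p i) * lagr_tri N p i x)"
  have g: "g \<in> tri_poly N"
    unfolding g_def by (rule tri_poly_sum) (auto simp: lagr_tri_in_tri_poly[OF uni])
  have g_nodes: "g (p m) = f (p m)" if "m < Np N" for m
  proof -
    have "g (p m) = (\<Sum>i<Np N. f (p i) * (if m = i then 1 else 0))"
      unfolding g_def using lagr_tri_nodal[OF uni] that by (intro sum.cong) auto
    also have "\<dots> = f (p m)" using that by (simp add: if_distrib cong: if_cong)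
    finally show ?thesis .
  qed
  have unique: "\<exists>!h. h \<in> tri_poly N \<and> (\<forall>m<Np N. h (p m) = f (p m))"
    using uni unfolding unisolvent_def by (rule spec)
  have "f = g"
    using the1_equality[OF unique, of f] the1_equality[OF unique, of g] f g g_nodes by auto
  then have "f x = g x" by simp
  then show ?thesis by (simp add: g_def)
qed

definition lagr_tri_dr :: "nat \<Rightarrow> (nat \<Rightarrow> real \<times> real) \<Rightarrow> nat \<Rightarrow> real \<times> real \<Rightarrow> real" where
  "lagr_tri_dr N p i x = deriv (\<lambda>y. lagr_tri N p i (y, snd x)) (fst x)"

definition lagr_tri_ds :: "nat \<Rightarrow> (nat \<Rightarrow> real \<times> real) \<Rightarrow> nat \<Rightarrow> real \<times> real \<Rightarrow> real" where
  "lagr_tri_ds N p i x = deriv (\<lambda>y. lagr_tri N p i (fst x, y)) (snd x)"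

lemma lagr_tri_dr:
  assumes "unisolvent N p"
  shows "lagr_tri_dr N p i \<in> tri_poly N"
    and "((\<lambda>x. lagr_tri N p i (x, s)) has_real_derivative lagr_tri_dr N p i (r, s)) (at r)"
proof -
  obtain f' where f': "f' \<in> tri_poly N"
    "\<And>r s. ((\<lambda>x. lagr_tri N p i (x, s)) has_real_derivative f' (r, s)) (at r)"
    using tri_poly_has_derivative_r[OF lagr_tri_in_tri_poly[OF assms]] by blast
  have "lagr_tri_dr N p i = f'"
  proof
    fix x
    show "lagr_tri_dr N p i x = f' x"
      unfolding lagr_tri_dr_def using DERIV_imp_deriv[OF f'(2)[where r="fst x" and s="snd x"]] by simp
  qed
  then show "lagr_tri_dr N p i \<in> tri_poly N"
    "((\<lambda>x. lagr_tri N p i (x, s)) has_real_derivative lagr_tri_dr N p i (r, s)) (at r)"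
    using f' by simp_all
qed

lemma lagr_tri_ds:
  assumes "unisolvent N p"
  shows "lagr_tri_ds N p i \<in> tri_poly N"
    and "((\<lambda>x. lagr_tri N p i (r, x)) has_real_derivative lagr_tri_ds N p i (r, s)) (at s)"
proof -
  obtain f' where f': "f' \<in> tri_poly N"
    "\<And>r s. ((\<lambda>x. lagr_tri N p i (r, x)) has_real_derivative f' (r, s)) (at s)"
    using tri_poly_has_derivative_s[OF lagr_tri_in_tri_poly[OF assms]] by blast
  have "lagr_tri_ds N p i = f'"
  proof
    fix x
    show "lagr_tri_ds N p i x = f' x"
      unfolding lagr_tri_ds_def using DERIV_imp_deriv[OF f'(2)[where r="fst x" and s="snd x"]] by simp
  qed
  then show "lagr_tri_ds N p i \<in> tri_poly N"
    "((\<lambda>x. lagr_tri N p i (r, x)) has_real_derivative lagr_tri_ds N p i (r, s)) (at s)"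
    using f' by simp_all
qed

section \<open>The one-dimensional Lagrange basis\<close>

definition lagr_poly :: "nat \<Rightarrow> (nat \<Rightarrow> real) \<Rightarrow> nat \<Rightarrow> real poly" where
  "lagr_poly N t j = (\<Prod>m\<in>{0..N} - {j}. [: - t m / (t j - t m), 1 / (t j - t m) :])"

lemma lagr_1d_eq_poly: "lagr_1d N t j = poly (lagr_poly N t j)"
  unfolding lagr_1d_def lagr_poly_def poly_prod
  by (intro ext prod.cong) (auto simp: diff_divide_distrib)

lemma degree_lagr_poly: "j \<le> N \<Longrightarrow> degree (lagr_poly N t j) \<le> N"
proof -
  assume j: "j \<le> N"
  have "degree (lagr_poly N t j)
      \<le> sum (degree \<circ> (\<lambda>m. [: - t m / (t j - t m), 1 / (t j - t m) :])) ({0..N} - {j})"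
    unfolding lagr_poly_def by (rule degree_prod_sum_le) simp
  also have "\<dots> \<le> sum (\<lambda>m. 1) ({0..N} - {j})"
    by (intro sum_mono) auto
  also have "\<dots> = N" using j by simp
  finally show ?thesis .
qed

lemma lagr_1d_has_real_derivative:
  "(lagr_1d N t j has_real_derivative deriv (lagr_1d N t j) x) (at x)"
  and deriv_lagr_1d: "deriv (lagr_1d N t j) = poly (pderiv (lagr_poly N t j))"
proof -
  show "deriv (lagr_1d N t j) = poly (pderiv (lagr_poly N t j))"
    unfolding lagr_1d_eq_poly by (intro ext DERIV_imp_deriv poly_DERIV)
  then show "(lagr_1d N t j has_real_derivative deriv (lagr_1d N t j) x) (at x)"
    unfolding lagr_1d_eq_poly by simp
qed

lemma continuous_on_lagr_1d [continuous_intros]: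
  "continuous_on S f \<Longrightarrow> continuous_on S (\<lambda>x. lagr_1d N t j (f x))"
  unfolding lagr_1d_eq_poly by (intro continuous_intros)

lemma continuous_on_deriv_lagr_1d [continuous_intros]:
  "continuous_on S f \<Longrightarrow> continuous_on S (\<lambda>x. deriv (lagr_1d N t j) (f x))"
  unfolding deriv_lagr_1d by (intro continuous_intros)

lemma lagr_1d_nodal:
  assumes inj: "inj_on t {0..N}" and "j \<le> N" "m \<le> N"
  shows "lagr_1d N t j (t m) = (if m = j then 1 else 0)"
proof (cases "m = j")
  case True
  have "lagr_1d N t j (t m) = (\<Prod>k\<in>{0..N} - {j}. 1)"
    unfolding lagr_1d_def using True inj assms(2)
    by (intro prod.cong) (auto dest: inj_onD)
  then show ?thesis using True by simp
next
  case False
  then show ?thesis unfolding lagr_1d_def using assms(3)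
    by (auto intro!: prod_zero bexI[of _ m])
qed

lemma lagr_1d_interpolation:
  assumes inj: "inj_on t {0..N}" and dQ: "degree Q \<le> N"
  shows "poly Q x = (\<Sum>j<N+1. poly Q (t j) * lagr_1d N t j x)"
proof -
  define R where "R = (\<Sum>j<N+1. Polynomial.smult (poly Q (t j)) (lagr_poly N t j))"
  have poly_R: "poly R y = (\<Sum>j<N+1. poly Q (t j) * lagr_1d N t j y)" for y
    unfolding R_def poly_sum by (simp add: lagr_1d_eq_poly)
  have "degree R \<le> N" unfolding R_def
  proof (rule degree_sum_le)
    fix j assume "j \<in> {..<N+1}"
    then show "degree (Polynomial.smult (poly Q (t j)) (lagr_poly N t j)) \<le> N"
      using degree_smult_le[of "poly Q (t j)" "lagr_poly N t j"] degree_lagr_poly[of j N t] by simp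
  qed simp
  have "Q = R"
  proof (rule poly_eqI_degree[of "t ` {0..N}"])
    fix y assume "y \<in> t ` {0..N}"
    then obtain m where m: "m \<le> N" "y = t m" by auto
    have "poly R y = (\<Sum>j<N+1. poly Q (t j) * (if m = j then 1 else 0))"
      unfolding poly_R m(2) using inj m by (intro sum.cong) (auto simp: lagr_1d_nodal)
    also have "\<dots> = poly Q y" using m by (simp add: if_distrib cong: if_cong)
    finally show "poly Q y = poly R y" by simp
  next
    have "card (t ` {0..N}) = N + 1" using inj by (simp add: card_image)
    then show "degree Q < card (t ` {0..N})" "degree R < card (t ` {0..N})"
      using dQ \<open>degree R \<le> N\<close> by auto
  qed
  then have "poly Q x = poly R x" by simp
  then show ?thesis by (simp only: poly_R)
qed

text \<open>The product has degree at most \<open>N\<close>, so interpolation at the \<open>N + 1\<close> nodes is exact.\<close>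
lemma lagr_1d_interpolation_affine_deriv:
  assumes inj: "inj_on t {0..N}" and N: "1 \<le> N" and j': "j' \<le> N"
  shows "(\<Sum>j<N+1. lagr_1d N t j u * ((\<alpha> + \<beta> * t j) * deriv (lagr_1d N t j') (t j)))
       = (\<alpha> + \<beta> * u) * deriv (lagr_1d N t j') u"
proof -
  define Q where "Q = [:\<alpha>, \<beta>:] * pderiv (lagr_poly N t j')"
  have "degree Q \<le> degree [:\<alpha>, \<beta>:] + degree (pderiv (lagr_poly N t j'))"
    unfolding Q_def by (rule degree_mult_le)
  also have "\<dots> \<le> 1 + (N - 1)"
    using degree_lagr_poly[OF j', of t] by (intro add_mono) (auto simp: degree_pderiv)
  finally have "degree Q \<le> N" using N by simp
  moreover have "poly Q y = (\<alpha> + \<beta> * y) * deriv (lagr_1d N t j') y" for y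
    by (simp add: Q_def deriv_lagr_1d algebra_simps)
  ultimately show ?thesis using lagr_1d_interpolation[OF inj, of Q u] by (simp add: mult_ac)
qed

section \<open>Integration over the reference elements\<close>

lemma ref_tri_halfspaces:
  "ref_tri = {x. inner (-1, 0) x \<le> 0} \<inter> {x. inner (0, -1) x \<le> 0} \<inter> {x. inner (1, 1) x \<le> (1::real)}"
  by (auto simp: ref_tri_def inner_prod_def)

lemma ref_wedge_halfspaces:
  "ref_wedge = {x. inner (-1, 0, 0) x \<le> 0} \<inter> {x. inner (0, -1, 0) x \<le> 0}
     \<inter> {x. inner (1, 1, 0) x \<le> (1::real)} \<inter> {x. inner (0, 0, -1) x \<le> 0}
     \<inter> {x. inner (0, 0, 1) x \<le> (1::real)}"
  by (auto simp: ref_wedge_def inner_prod_def)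

lemma compact_ref_tri: "compact ref_tri"
proof -
  have "closed ref_tri" unfolding ref_tri_halfspaces by (intro closed_Int closed_halfspace_le)
  moreover have "bounded ref_tri"
    by (rule bounded_subset[OF bounded_cbox[of "(0,0)" "(1,1)"]]) (auto simp: ref_tri_def cbox_Pair_eq)
  ultimately show ?thesis by (simp add: compact_eq_bounded_closed)
qed

lemma compact_ref_wedge: "compact ref_wedge"
proof -
  have "closed ref_wedge" unfolding ref_wedge_halfspaces by (intro closed_Int closed_halfspace_le)
  moreover have "bounded ref_wedge"
    by (rule bounded_subset[OF bounded_cbox[of "(0,0,0)" "(1,1,1)"]])
       (auto simp: ref_wedge_def cbox_Pair_eq)
  ultimately show ?thesis by (simp add: compact_eq_bounded_closed)
qed

lemma convex_ref_tri: "convex ref_tri"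
  unfolding ref_tri_halfspaces by (intro convex_Int convex_halfspace_le)

lemma convex_ref_wedge: "convex ref_wedge"
  unfolding ref_wedge_halfspaces by (intro convex_Int convex_halfspace_le)

lemma interior_ref_tri_nonempty: "interior ref_tri \<noteq> {}"
proof -
  define U where "U = {x::real\<times>real. 0 < fst x} \<inter> {x. 0 < snd x} \<inter> {x. fst x + snd x < 1}"
  have "open U" unfolding U_def by (intro open_Int open_Collect_less continuous_intros)
  moreover have "U \<subseteq> ref_tri" by (auto simp: U_def ref_tri_def)
  ultimately have "U \<subseteq> interior ref_tri" by (rule interior_maximal[rotated])
  moreover have "(1/4, 1/4) \<in> U" by (simp add: U_def)
  ultimately show ?thesis by blast
qed

lemma interior_ref_wedge_nonempty: "interior ref_wedge \<noteq> {}"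
proof -
  define U where "U = {x::real\<times>real\<times>real. 0 < fst x} \<inter> {x. 0 < fst (snd x)}
     \<inter> {x. fst x + fst (snd x) < 1} \<inter> {x. 0 < snd (snd x)} \<inter> {x. snd (snd x) < 1}"
  have "open U" unfolding U_def by (intro open_Int open_Collect_less continuous_intros)
  moreover have "U \<subseteq> ref_wedge" by (auto simp: U_def ref_wedge_def)
  ultimately have "U \<subseteq> interior ref_wedge" by (rule interior_maximal[rotated])
  moreover have "(1/4, 1/4, 1/2) \<in> U" by (simp add: U_def)
  ultimately show ?thesis by blast
qed

lemma integral_eq_lborel_indicator:
  fixes f :: "'a::euclidean_space \<Rightarrow> real"
  assumes "compact S" "continuous_on S f"
  shows "integrable lborel (\<lambda>x. indicator S x * f x)"
    and "integral S f = (\<integral>x. indicator S x * f x \<partial>lborel)"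
proof -
  show int: "integrable lborel (\<lambda>x. indicator S x * f x)"
    using borel_integrable_compact[OF assms] by simp
  then show "integral S f = (\<integral>x. indicator S x * f x \<partial>lborel)"
    using set_borel_integral_eq_integral(2)[of S f]
    by (simp add: set_integrable_def set_lebesgue_integral_def)
qed

lemma integrable_on_compact_continuous:
  fixes f :: "'a::euclidean_space \<Rightarrow> real"
  assumes "compact S" "continuous_on S f"
  shows "f integrable_on S"
  using borel_integrable_compact[OF assms] set_borel_integral_eq_integral(1)
  unfolding set_integrable_def by blast

text \<open>The function vanishes on every box inside the interior, hence on the closure of the
  interior, which is \<open>S\<close> by convexity.\<close>
lemma continuous_nonneg_integral_zero_imp_zero:
  fixes f :: "'a::euclidean_space \<Rightarrow> real"
  assumes S: "compact S" "convex S" "interior S \<noteq> {}" and cf: "continuous_on S f"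
    and nn: "\<And>x. x \<in> S \<Longrightarrow> 0 \<le> f x" and I0: "integral S f = 0" and x: "x \<in> S"
  shows "f x = 0"
proof -
  have intS: "f integrable_on S" by (rule integrable_on_compact_continuous[OF S(1) cf])
  have inner: "f y = 0" if y: "y \<in> interior S" for y
  proof -
    obtain a b where ab: "cbox a b \<subseteq> interior S" "y \<in> box a b"
      using open_contains_cbox[OF open_interior y] by metis
    have sub: "cbox a b \<subseteq> S" using ab(1) interior_subset by blast
    have cb: "continuous_on (cbox a b) f" using cf sub by (rule continuous_on_subset)
    have intC: "f integrable_on cbox a b" by (rule integrable_continuous[OF cb])
    have "integral (cbox a b) f \<le> integral S f"
      by (rule integral_subset_le[OF sub intC intS]) (use nn in auto)
    moreover have "0 \<le> integral (cbox a b) f"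
      by (rule integral_nonneg[OF intC]) (use nn sub in auto)
    ultimately have "(f has_integral 0) (cbox a b)" using I0 intC by (simp add: has_integral_iff)
    then show "f y = 0"
      by (rule has_integral_0_cbox_imp_0[OF cb, rotated])
         (use nn sub ab(2) box_subset_cbox[of a b] in blast)+
  qed
  have cl: "closed {x \<in> S. f x = 0}"
    by (rule continuous_closed_preimage_constant[OF cf compact_imp_closed[OF S(1)]])
  have "interior S \<subseteq> {x \<in> S. f x = 0}" using inner interior_subset by blast
  then have "closure (interior S) \<subseteq> {x \<in> S. f x = 0}" by (rule closure_minimal[OF _ cl])
  moreover have "closure (interior S) = S"
    using convex_closure_interior[OF S(2,3)] closure_closed[OF compact_imp_closed[OF S(1)]] by simp
  ultimately show ?thesis using x by blast
qed

text \<open>A kernel vector \<open>v\<close> makes \<open>(\<Sum>\<^sub>a v\<^sub>a f\<^sub>a)\<^sup>2 w\<close> integrate to zero, so the combination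
  vanishes on \<open>S\<close>, in particular at the node \<open>x\<^sub>c\<close>, where it equals \<open>v\<^sub>c\<close>.\<close>
lemma gram_matrix_invertible:
  fixes f :: "nat \<Rightarrow> 'a::euclidean_space \<Rightarrow> real" and w :: "'a \<Rightarrow> real" and x :: "nat \<Rightarrow> 'a"
  assumes S: "compact S" "convex S" "interior S \<noteq> {}"
    and cf: "\<And>a. a < n \<Longrightarrow> continuous_on S (f a)"
    and cw: "continuous_on S w" and wpos: "\<And>y. y \<in> S \<Longrightarrow> 0 < w y"
    and xS: "\<And>c. c < n \<Longrightarrow> x c \<in> S"
    and nodal: "\<And>a c. a < n \<Longrightarrow> c < n \<Longrightarrow> f a (x c) = (if a = c then 1 else 0)"
  shows "\<exists>B. is_minv n (\<lambda>a b. integral S (\<lambda>y. f a y * f b y * w y)) B"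
proof (rule ex_is_minv_if_kernel_trivial)
  fix v :: "nat \<Rightarrow> real"
  assume hv: "\<forall>a<n. (\<Sum>b<n. integral S (\<lambda>y. f a y * f b y * w y) * v b) = 0"
  define q where "q y = (\<Sum>a<n. v a * f a y)" for y
  have cq: "continuous_on S q" unfolding q_def by (intro continuous_intros) (use cf in auto)
  have int: "(\<lambda>y. (v a * v b) * (f a y * f b y * w y)) integrable_on S" if "a < n" "b < n" for a b
    using cf[OF that(1)] cf[OF that(2)] cw
    by (intro integrable_on_compact_continuous[OF S(1)] continuous_intros)
  have "0 = (\<Sum>a<n. v a * (\<Sum>b<n. integral S (\<lambda>y. f a y * f b y * w y) * v b))"
    using hv by simp
  also have "\<dots> = (\<Sum>a<n. \<Sum>b<n. integral S (\<lambda>y. (v a * v b) * (f a y * f b y * w y)))"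
    by (simp add: sum_distrib_left mult_ac)
  also have "\<dots> = (\<Sum>a<n. integral S (\<lambda>y. \<Sum>b<n. (v a * v b) * (f a y * f b y * w y)))"
    by (intro sum.cong refl integral_sum[symmetric]) (use int in auto)
  also have "\<dots> = integral S (\<lambda>y. \<Sum>a<n. \<Sum>b<n. (v a * v b) * (f a y * f b y * w y))"
    by (intro integral_sum[symmetric]) (use int in \<open>auto intro: integrable_sum\<close>)
  also have "\<dots> = integral S (\<lambda>y. q y * q y * w y)"
    by (simp add: q_def sum_distrib_left sum_distrib_right mult_ac)
  finally have I0: "integral S (\<lambda>y. q y * q y * w y) = 0" by simp
  have "q y * q y * w y = 0" if "y \<in> S" for y
    using cq cw wpos
    by (intro continuous_nonneg_integral_zero_imp_zero[OF S _ _ I0 that])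
       (auto intro!: continuous_intros simp: less_imp_le)
  then have "q (x c) = 0" if "c < n" for c
    using wpos[OF xS[OF that]] xS[OF that] by fastforce
  moreover have "q (x c) = v c" if "c < n" for c
    unfolding q_def using nodal that by (simp add: if_distrib[where f="\<lambda>x. _ * x"] cong: if_cong)
  ultimately show "\<forall>b<n. v b = 0" by simp
qed

lemma lborel_integral_tensor:
  fixes f g :: "real \<Rightarrow> real"
  assumes A: "compact A" "continuous_on A f" and B: "compact B" "continuous_on B g"
  shows "(\<integral>z. indicator A (fst z) * f (fst z) * (indicator B (snd z) * g (snd z)) \<partial>lborel)
    = (\<integral>s. indicator A s * f s \<partial>lborel) * (\<integral>u. indicator B u * g u \<partial>lborel)"
proof -
  have cont: "continuous_on (A \<times> B) (\<lambda>z. f (fst z) * g (snd z))"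
    by (intro continuous_on_mult continuous_on_compose2[OF A(2)] continuous_on_compose2[OF B(2)])
       (auto intro!: continuous_intros)
  have eq: "(\<lambda>z. indicator (A \<times> B) z * (f (fst z) * g (snd z)))
      = (\<lambda>(s, u). indicator A s * f s * (indicator B u * g u))"
    by (auto simp: fun_eq_iff indicator_def)
  have "integrable (lborel \<Otimes>\<^sub>M lborel) (\<lambda>(s, u). indicator A s * f s * (indicator B u * g u))"
    using integral_eq_lborel_indicator(1)[OF compact_Times[OF A(1) B(1)] cont]
    unfolding eq lborel_prod .
  then have "(\<integral>z. (\<lambda>(s, u). indicator A s * f s * (indicator B u * g u)) z \<partial>(lborel \<Otimes>\<^sub>M lborel))
      = (\<integral>s. (\<integral>u. indicator A s * f s * (indicator B u * g u) \<partial>lborel) \<partial>lborel)"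
    by (rule lborel_pair.integral_fst[symmetric])
  then show ?thesis by (simp add: lborel_prod case_prod_beta)
qed

lemma continuous_on_ref_wedge_tensor:
  fixes F :: "real \<times> real \<Rightarrow> real" and G :: "real \<Rightarrow> real"
  assumes cF: "continuous_on ref_tri F" and cG: "continuous_on {0..1} G"
  shows "continuous_on ref_wedge (\<lambda>(r, s, u). F (r, s) * G u)"
proof -
  have "continuous_on ref_wedge (\<lambda>x. F (fst x, fst (snd x)))"
    by (rule continuous_on_compose2[OF cF])
       (auto intro!: continuous_intros simp: ref_wedge_def ref_tri_def)
  moreover have "continuous_on ref_wedge (\<lambda>x. G (snd (snd x)))"
    by (rule continuous_on_compose2[OF cG]) (auto intro!: continuous_intros simp: ref_wedge_def)
  ultimately show ?thesis by (simp add: case_prod_beta' continuous_on_mult)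
qed

lemma integral_ref_wedge_tensor:
  fixes F :: "real \<times> real \<Rightarrow> real" and G :: "real \<Rightarrow> real"
  assumes cF: "continuous_on ref_tri F" and cG: "continuous_on {0..1} G"
  shows "integral ref_wedge (\<lambda>(r, s, u). F (r, s) * G u) = integral ref_tri F * integral {0..1} G"
proof -
  define \<phi> where "\<phi> = (\<lambda>x. indicator ref_tri x * F x)"
  define \<psi> where "\<psi> u = indicator {0..1::real} u * G u" for u
  have cW: "continuous_on ref_wedge (\<lambda>(r, s, u). F (r, s) * G u)"
    by (rule continuous_on_ref_wedge_tensor[OF cF cG])
  have wedge_eq: "(\<lambda>x. indicator ref_wedge x * (\<lambda>(r, s, u). F (r, s) * G u) x)
      = (\<lambda>(r, z). \<phi> (r, fst z) * \<psi> (snd z))"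
    by (auto simp: fun_eq_iff \<phi>_def \<psi>_def indicator_def ref_wedge_def ref_tri_def)
  have slice: "(\<integral>z. \<phi> (r, fst z) * \<psi> (snd z) \<partial>lborel)
      = (\<integral>s. \<phi> (r, s) \<partial>lborel) * (\<integral>u. \<psi> u \<partial>lborel)" for r
  proof -
    have "{s. (r, s) \<in> ref_tri} = (if 0 \<le> r then {0..1 - r} else {})"
      by (auto simp: ref_tri_def)
    then have "compact {s. (r, s) \<in> ref_tri}" by simp
    moreover have "continuous_on {s. (r, s) \<in> ref_tri} (\<lambda>s. F (r, s))"
      by (rule continuous_on_compose2[OF cF]) (auto intro!: continuous_intros)
    ultimately show ?thesis
      using lborel_integral_tensor[OF _ _ compact_Icc cG, where A="{s. (r, s) \<in> ref_tri}"]
      by (simp add: \<phi>_def \<psi>_def indicator_def)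
  qed
  have "integral ref_wedge (\<lambda>(r, s, u). F (r, s) * G u)
      = (\<integral>x. (\<lambda>(r, z). \<phi> (r, fst z) * \<psi> (snd z)) x \<partial>(lborel \<Otimes>\<^sub>M lborel))"
    using integral_eq_lborel_indicator(2)[OF compact_ref_wedge cW] by (simp add: wedge_eq lborel_prod)
  also have "\<dots> = (\<integral>r. (\<integral>z. \<phi> (r, fst z) * \<psi> (snd z) \<partial>lborel) \<partial>lborel)"
    using integral_eq_lborel_indicator(1)[OF compact_ref_wedge cW]
    by (intro lborel_pair.integral_fst[symmetric]) (simp add: wedge_eq lborel_prod)
  also have "\<dots> = (\<integral>r. (\<integral>s. \<phi> (r, s) \<partial>lborel) \<partial>lborel) * (\<integral>u. \<psi> u \<partial>lborel)"
    by (simp add: slice)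
  also have "(\<integral>r. (\<integral>s. \<phi> (r, s) \<partial>lborel) \<partial>lborel) = integral ref_tri F"
  proof -
    have "integrable (lborel \<Otimes>\<^sub>M lborel) \<phi>"
      using integral_eq_lborel_indicator(1)[OF compact_ref_tri cF] by (simp add: \<phi>_def lborel_prod)
    then have "(\<integral>r. (\<integral>s. \<phi> (r, s) \<partial>lborel) \<partial>lborel) = (\<integral>x. \<phi> x \<partial>(lborel \<Otimes>\<^sub>M lborel))"
      by (rule lborel_pair.integral_fst')
    then show ?thesis
      using integral_eq_lborel_indicator(2)[OF compact_ref_tri cF] by (simp add: \<phi>_def lborel_prod)
  qed
  also have "(\<integral>u. \<psi> u \<partial>lborel) = integral {0..1} G"
    using integral_eq_lborel_indicator(2)[OF compact_Icc cG] by (simp add: \<psi>_def)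
  finally show ?thesis .
qed

section \<open>Element matrices\<close>

lemma pd_r_ell:
  "unisolvent N p \<Longrightarrow>
    pd_r (ell N p t b) r s u = lagr_tri_dr N p (b div (N + 1)) (r, s) * lagr_1d N t (b mod (N + 1)) u"
  unfolding pd_r_def ell_def by (intro DERIV_imp_deriv DERIV_cmult_right lagr_tri_dr(2))

lemma pd_s_ell:
  "unisolvent N p \<Longrightarrow>
    pd_s (ell N p t b) r s u = lagr_tri_ds N p (b div (N + 1)) (r, s) * lagr_1d N t (b mod (N + 1)) u"
  unfolding pd_s_def ell_def by (intro DERIV_imp_deriv DERIV_cmult_right lagr_tri_ds(2))

lemma pd_t_ell:
  "pd_t (ell N p t b) r s u
    = lagr_tri N p (b div (N + 1)) (r, s) * deriv (lagr_1d N t (b mod (N + 1))) u"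
  unfolding pd_t_def ell_def by (intro DERIV_imp_deriv DERIV_cmult lagr_1d_has_real_derivative)

lemma sum_lagr_tri_Dr_Ds_tri:
  assumes "unisolvent N p"
  shows "(\<Sum>i<Np N. lagr_tri N p i x * (rx * Dr_tri N p i i' + sx * Ds_tri N p i i'))
     = rx * lagr_tri_dr N p i' x + sx * lagr_tri_ds N p i' x"
proof -
  have "Dr_tri N p i i' = lagr_tri_dr N p i' (p i)" "Ds_tri N p i i' = lagr_tri_ds N p i' (p i)" for i
    by (simp_all add: Dr_tri_def Ds_tri_def lagr_tri_dr_def lagr_tri_ds_def)
  then show ?thesis
    using tri_poly_interpolation[OF assms lagr_tri_dr(1)[OF assms], of i' x]
      tri_poly_interpolation[OF assms lagr_tri_ds(1)[OF assms], of i' x]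
    by (simp add: sum_distrib_left sum.distrib algebra_simps)
qed

definition weak_diff_mat :: "nat \<Rightarrow> (nat \<Rightarrow> real \<times> real) \<Rightarrow> (nat \<Rightarrow> real)
    \<Rightarrow> (nat \<Rightarrow> real) \<Rightarrow> (nat \<Rightarrow> real) \<Rightarrow> (nat \<Rightarrow> real)
    \<Rightarrow> (real \<Rightarrow> real \<Rightarrow> real \<Rightarrow> real) \<Rightarrow> (real \<Rightarrow> real \<Rightarrow> real \<Rightarrow> real)
    \<Rightarrow> (real \<Rightarrow> real \<Rightarrow> real \<Rightarrow> real) \<Rightarrow> nat \<Rightarrow> nat \<Rightarrow> real" where
  "weak_diff_mat N p t vx vy vz Gr Gs Gt a b = integral ref_wedge
     (\<lambda>(r, s, u). (Gr r s u * pd_r (ell N p t b) r s u + Gs r s u * pd_s (ell N p t b) r s u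
                 + Gt r s u * pd_t (ell N p t b) r s u) * ell N p t a r s u * Jac vx vy vz r s u)"

lemma Sx_k_eq_weak_diff_mat:
  "Sx_k N p t vx vy vz
    = weak_diff_mat N p t vx vy vz (geo_rx vx vy vz) (geo_sx vx vy vz) (geo_tx vx vy vz)"
  by (simp add: fun_eq_iff Sx_k_def weak_diff_mat_def)

lemma Sy_k_eq_weak_diff_mat:
  "Sy_k N p t vx vy vz
    = weak_diff_mat N p t vx vy vz (geo_ry vx vy vz) (geo_sy vx vy vz) (geo_ty vx vy vz)"
  by (simp add: fun_eq_iff Sy_k_def weak_diff_mat_def)

definition wedge_diff_mat :: "nat \<Rightarrow> (nat \<Rightarrow> real \<times> real) \<Rightarrow> (nat \<Rightarrow> real) \<Rightarrow> real \<Rightarrow> real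
    \<Rightarrow> (real \<Rightarrow> real) \<Rightarrow> (nat \<Rightarrow> nat \<Rightarrow> real) \<Rightarrow> nat \<Rightarrow> nat \<Rightarrow> real" where
  "wedge_diff_mat N p t rx sx g L a b =
     kron (N + 1) (\<lambda>i i'. rx * Dr_tri N p i i' + sx * Ds_tri N p i i') idm a b
     + kron (N + 1) L (mmul (N + 1) (diagm (\<lambda>j. g (t j))) (Dt_1d N t)) a b"

lemma sum_ell_wedge_diff_mat:
  assumes uni: "unisolvent N p" and inj: "inj_on t {0..N}" and N: "1 \<le> N"
    and g: "\<And>u. g u = \<alpha> + \<beta> * u" and j': "j' \<le> N"
  shows "(\<Sum>c<Np N * (N + 1). ell N p t c r s u * wedge_diff_mat N p t rx sx g L c (i' * (N + 1) + j'))
     = (rx * lagr_tri_dr N p i' (r, s) + sx * lagr_tri_ds N p i' (r, s)) * lagr_1d N t j' u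
       + (\<Sum>i<Np N. lagr_tri N p i (r, s) * L i i') * (g u * deriv (lagr_1d N t j') u)"
proof -
  let ?q = "N + 1"
  define R where "R i i' = rx * Dr_tri N p i i' + sx * Ds_tri N p i i'" for i i'
  have entry: "ell N p t (i * ?q + j) r s u * wedge_diff_mat N p t rx sx g L (i * ?q + j) (i' * ?q + j')
      = (lagr_tri N p i (r, s) * R i i') * (lagr_1d N t j u * idm j j')
        + (lagr_tri N p i (r, s) * L i i') * (lagr_1d N t j u * (g (t j) * Dt_1d N t j j'))"
    if "j < ?q" for i j
  proof -
    have "j' < ?q" using j' by simp
    with that show ?thesis
      by (simp only: ell_def wedge_diff_mat_def kron_def flat_index_div_mod)
         (simp add: mmul_diagm_left R_def algebra_simps)
  qed
  have "(\<Sum>c<Np N * ?q. ell N p t c r s u * wedge_diff_mat N p t rx sx g L c (i' * ?q + j'))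
      = (\<Sum>i<Np N. \<Sum>j<?q. ell N p t (i * ?q + j) r s u
            * wedge_diff_mat N p t rx sx g L (i * ?q + j) (i' * ?q + j'))"
    by (rule sum_lessThan_mult_split)
  also have "\<dots> = (\<Sum>i<Np N. lagr_tri N p i (r, s) * R i i') * (\<Sum>j<?q. lagr_1d N t j u * idm j j')
      + (\<Sum>i<Np N. lagr_tri N p i (r, s) * L i i')
        * (\<Sum>j<?q. lagr_1d N t j u * (g (t j) * Dt_1d N t j j'))"
    by (simp only: sum_product sum.distrib[symmetric]) (intro sum.cong refl entry, simp)
  also have "(\<Sum>j<?q. lagr_1d N t j u * (g (t j) * Dt_1d N t j j')) = g u * deriv (lagr_1d N t j') u"
    unfolding g Dt_1d_def by (rule lagr_1d_interpolation_affine_deriv[OF inj N j'])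
  also have "(\<Sum>j<?q. lagr_1d N t j u * idm j j') = lagr_1d N t j' u"
    using j' by (intro sum_idm_right) simp
  finally show ?thesis by (simp add: R_def sum_lagr_tri_Dr_Ds_tri[OF uni])
qed

locale nodal_wedge =
  fixes N :: nat and p :: "nat \<Rightarrow> real \<times> real" and t :: "nat \<Rightarrow> real"
    and vx vy vz :: "nat \<Rightarrow> real"
  assumes N_ge_1: "1 \<le> N"
    and nodes_in_ref_tri: "\<forall>i<Np N. p i \<in> ref_tri"
    and unisolvent: "unisolvent N p"
    and gll: "gll_nodes N t"
    and vertically_mapped: "vertically_mapped vx vy"
    and Jac_pos: "\<forall>(r, s, u)\<in>ref_wedge. Jac vx vy vz r s u > 0"
begin

lemma inj_on_gll: "inj_on t {0..N}"
  using gll strict_mono_on_imp_inj_on unfolding gll_nodes_def by blast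

lemma gll_in_unit_interval: "j \<le> N \<Longrightarrow> 0 \<le> t j \<and> t j \<le> 1"
  using gll strict_mono_on_leD[of "{0..N}" t 0 j] strict_mono_on_leD[of "{0..N}" t j N]
  by (auto simp: gll_nodes_def)

lemma Jac_eq_Jac_0: "Jac vx vy vz r s u = Jac vx vy vz r s 0"
  by (rule Jac_vertically_mapped_indep_t[OF vertically_mapped])

lemma Jac_0_pos: "(r, s) \<in> ref_tri \<Longrightarrow> 0 < Jac vx vy vz r s 0"
  using Jac_pos by (auto simp: ref_tri_def ref_wedge_def)

lemmas continuous_on_Jac [continuous_intros] =
  continuous_on_Jac_vertically_mapped[OF vertically_mapped]

lemma continuous_on_lagr_tri [continuous_intros]:
  "continuous_on S f \<Longrightarrow> continuous_on S (\<lambda>x. lagr_tri N p i (f x))"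
  and continuous_on_lagr_tri_dr [continuous_intros]:
  "continuous_on S f \<Longrightarrow> continuous_on S (\<lambda>x. lagr_tri_dr N p i (f x))"
  and continuous_on_lagr_tri_ds [continuous_intros]:
  "continuous_on S f \<Longrightarrow> continuous_on S (\<lambda>x. lagr_tri_ds N p i (f x))"
  by (auto intro!: continuous_on_compose2[OF continuous_on_tri_poly[where S=UNIV]]
      lagr_tri_in_tri_poly lagr_tri_dr(1) lagr_tri_ds(1) unisolvent)

lemma geo_factors_affine:
  obtains rx sx ry sy :: real and gx gy :: "real \<Rightarrow> real"
  where "\<And>r s u. (r, s, u) \<in> ref_wedge \<Longrightarrow>
      geo_rx vx vy vz r s u = rx \<and> geo_sx vx vy vz r s u = sx
      \<and> geo_ry vx vy vz r s u = ry \<and> geo_sy vx vy vz r s u = sy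
      \<and> geo_tx vx vy vz r s u * Jac vx vy vz r s u = gx u
      \<and> geo_ty vx vy vz r s u * Jac vx vy vz r s u = gy u"
    and "\<And>u. gx u = gx 0 + (gx 1 - gx 0) * u" and "\<And>u. gy u = gy 0 + (gy 1 - gy 0) * u"
proof -
  define gx where
    "gx u = (vy 2 - vy 1) * pd_s (Phi_c vz) 0 0 u - (vy 3 - vy 1) * pd_r (Phi_c vz) 0 0 u" for u
  define gy where
    "gy u = (vx 3 - vx 1) * pd_r (Phi_c vz) 0 0 u - (vx 2 - vx 1) * pd_s (Phi_c vz) 0 0 u" for u
  have "geo_rx vx vy vz r s u = (vy 3 - vy 1) / jac_xy vx vy
      \<and> geo_sx vx vy vz r s u = - (vy 2 - vy 1) / jac_xy vx vy
      \<and> geo_ry vx vy vz r s u = - (vx 3 - vx 1) / jac_xy vx vy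
      \<and> geo_sy vx vy vz r s u = (vx 2 - vx 1) / jac_xy vx vy
      \<and> geo_tx vx vy vz r s u * Jac vx vy vz r s u = gx u
      \<and> geo_ty vx vy vz r s u * Jac vx vy vz r s u = gy u"
    if "(r, s, u) \<in> ref_wedge" for r s u
  proof -
    have "jac_xy vx vy \<noteq> 0" "pd_t (Phi_c vz) r s u \<noteq> 0"
      using Jac_pos that by (auto simp: Jac_vertically_mapped[OF vertically_mapped])
    from geo_factors_vertically_mapped[OF vertically_mapped this] show ?thesis
      by (simp add: gx_def gy_def pd_r_Phi_c pd_s_Phi_c)
  qed
  moreover have "gx u = gx 0 + (gx 1 - gx 0) * u" "gy u = gy 0 + (gy 1 - gy 0) * u" for u
    by (simp_all add: gx_def gy_def pd_r_Phi_c pd_s_Phi_c algebra_simps)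
  ultimately show ?thesis by (rule that)
qed

lemma is_minv_mass_k:
  "is_minv (Np N * (N + 1)) (mass_k N p t vx vy vz) (minv (Np N * (N + 1)) (mass_k N p t vx vy vz))"
proof -
  let ?q = "N + 1"
  define f where "f a y = ell N p t a (fst y) (fst (snd y)) (snd (snd y))" for a y
  define w where "w y = Jac vx vy vz (fst y) (fst (snd y)) (snd (snd y))" for y
  define x where "x c = (fst (p (c div ?q)), snd (p (c div ?q)), t (c mod ?q))" for c
  have "mass_k N p t vx vy vz = (\<lambda>a b. integral ref_wedge (\<lambda>y. f a y * f b y * w y))"
    by (simp add: fun_eq_iff mass_k_def f_def w_def case_prod_beta')
  moreover have "\<exists>B. is_minv (Np N * ?q) (\<lambda>a b. integral ref_wedge (\<lambda>y. f a y * f b y * w y)) B"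
  proof (rule gram_matrix_invertible[OF compact_ref_wedge convex_ref_wedge interior_ref_wedge_nonempty])
    show "continuous_on ref_wedge (f a)" for a
      unfolding f_def ell_def by (intro continuous_intros)
    show "continuous_on ref_wedge w"
      unfolding w_def by (intro continuous_intros)
    show "0 < w y" if "y \<in> ref_wedge" for y
      using bspec[OF Jac_pos that] by (simp add: w_def case_prod_beta')
    show "x c \<in> ref_wedge" if "c < Np N * ?q" for c
    proof -
      have "p (c div ?q) \<in> ref_tri" "0 \<le> t (c mod ?q) \<and> t (c mod ?q) \<le> 1"
        using that nodes_in_ref_tri gll_in_unit_interval[of "c mod ?q"]
        by (auto simp: less_mult_imp_div_less)
      then show ?thesis by (auto simp: x_def ref_wedge_def ref_tri_def case_prod_beta')
    qed
    show "f a (x c) = (if a = c then 1 else 0)" if "a < Np N * ?q" "c < Np N * ?q" for a c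
    proof -
      have "a = c \<longleftrightarrow> a div ?q = c div ?q \<and> a mod ?q = c mod ?q"
        by (metis div_mult_mod_eq)
      moreover have "a div ?q < Np N" "c div ?q < Np N"
        using that by (auto simp: less_mult_imp_div_less)
      ultimately show ?thesis
        by (auto simp: f_def x_def ell_def lagr_tri_nodal[OF unisolvent] lagr_1d_nodal[OF inj_on_gll])
    qed
  qed
  ultimately show ?thesis using is_minv_minv by metis
qed

lemma is_minv_mass_tri_k:
  "is_minv (Np N) (mass_tri_k N p vx vy vz) (minv (Np N) (mass_tri_k N p vx vy vz))"
proof -
  define w where "w x = Jac vx vy vz (fst x) (snd x) 0" for x
  have "mass_tri_k N p vx vy vz
      = (\<lambda>a b. integral ref_tri (\<lambda>y. lagr_tri N p a y * lagr_tri N p b y * w y))"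
    by (simp add: fun_eq_iff mass_tri_k_def w_def case_prod_beta')
  moreover have
    "\<exists>B. is_minv (Np N) (\<lambda>a b. integral ref_tri (\<lambda>y. lagr_tri N p a y * lagr_tri N p b y * w y)) B"
    by (rule gram_matrix_invertible[OF compact_ref_tri convex_ref_tri interior_ref_tri_nonempty])
       (use nodes_in_ref_tri Jac_0_pos lagr_tri_nodal[OF unisolvent] in
         \<open>auto simp: w_def case_prod_beta' intro!: continuous_intros\<close>)
  ultimately show ?thesis using is_minv_minv by metis
qed


definition horizontal_entry :: "real \<Rightarrow> real \<Rightarrow> nat \<Rightarrow> nat \<Rightarrow> nat \<Rightarrow> nat \<Rightarrow> real" where
  "horizontal_entry rx sx i j i' j' = integral ref_wedge (\<lambda>(r, s, u).
     lagr_tri N p i (r, s) * lagr_1d N t j u * Jac vx vy vz r s u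
     * (rx * lagr_tri_dr N p i' (r, s) + sx * lagr_tri_ds N p i' (r, s)) * lagr_1d N t j' u)"

lemma weak_diff_mat_entry:
  assumes G: "\<And>r s u. (r, s, u) \<in> ref_wedge
      \<Longrightarrow> Gr r s u = rx \<and> Gs r s u = sx \<and> Gt r s u * Jac vx vy vz r s u = g u"
    and g: "\<And>u. g u = \<alpha> + \<beta> * u" and j: "j \<le> N" and j': "j' \<le> N"
  shows "weak_diff_mat N p t vx vy vz Gr Gs Gt (i * (N + 1) + j) (i' * (N + 1) + j')
    = horizontal_entry rx sx i j i' j'
      + mass_tri_ref N p i i'
        * integral {0..1} (\<lambda>u. lagr_1d N t j u * (g u * deriv (lagr_1d N t j') u))"
proof -
  let ?a = "i * (N + 1) + j" and ?b = "i' * (N + 1) + j'"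
  define H where "H = (\<lambda>(r, s, u). lagr_tri N p i (r, s) * lagr_1d N t j u * Jac vx vy vz r s u
     * (rx * lagr_tri_dr N p i' (r, s) + sx * lagr_tri_ds N p i' (r, s)) * lagr_1d N t j' u)"
  define C where "C = (\<lambda>x. lagr_tri N p i x * lagr_tri N p i' x)"
  define D where "D = (\<lambda>u. lagr_1d N t j u * (g u * deriv (lagr_1d N t j') u))"
  have pointwise: "(Gr r s u * pd_r (ell N p t ?b) r s u + Gs r s u * pd_s (ell N p t ?b) r s u
        + Gt r s u * pd_t (ell N p t ?b) r s u) * ell N p t ?a r s u * Jac vx vy vz r s u
      = H (r, s, u) + C (r, s) * D u" if W: "(r, s, u) \<in> ref_wedge" for r s u
  proof -
    have "j < N + 1" "j' < N + 1" using j j' by simp_all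
    note flat = flat_index_div_mod[OF this(1)] flat_index_div_mod[OF this(2)]
    have "(Gr r s u * pd_r (ell N p t ?b) r s u + Gs r s u * pd_s (ell N p t ?b) r s u
        + Gt r s u * pd_t (ell N p t ?b) r s u) * ell N p t ?a r s u * Jac vx vy vz r s u
      = (rx * pd_r (ell N p t ?b) r s u + sx * pd_s (ell N p t ?b) r s u) * ell N p t ?a r s u
          * Jac vx vy vz r s u
        + (Gt r s u * Jac vx vy vz r s u) * (pd_t (ell N p t ?b) r s u * ell N p t ?a r s u)"
      using G[OF W] by (simp add: algebra_simps)
    also have "\<dots> = H (r, s, u) + C (r, s) * D u"
      unfolding conjunct2[OF conjunct2[OF G[OF W]]]
      by (simp only: ell_def pd_r_ell[OF unisolvent] pd_s_ell[OF unisolvent] pd_t_ell flat)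
         (simp add: H_def C_def D_def algebra_simps)
    finally show ?thesis .
  qed
  have "weak_diff_mat N p t vx vy vz Gr Gs Gt ?a ?b
      = integral ref_wedge (\<lambda>x. H x + (\<lambda>(r, s, u). C (r, s) * D u) x)"
    unfolding weak_diff_mat_def
    by (rule integral_cong, clarify, simp only: prod.case pointwise)
  also have "\<dots> = integral ref_wedge H + integral ref_wedge (\<lambda>(r, s, u). C (r, s) * D u)"
    unfolding H_def C_def D_def g case_prod_beta'
    by (intro integral_add integrable_on_compact_continuous[OF compact_ref_wedge] continuous_intros)
  also have "integral ref_wedge (\<lambda>(r, s, u). C (r, s) * D u) = integral ref_tri C * integral {0..1} D"
    by (rule integral_ref_wedge_tensor; unfold C_def D_def g; intro continuous_intros)
  also have "integral ref_tri C = mass_tri_ref N p i i'"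
    by (simp add: C_def mass_tri_ref_def case_prod_beta')
  finally show ?thesis by (simp add: horizontal_entry_def H_def D_def)
qed

lemma mmul_mass_k:
  "mmul (Np N * (N + 1)) (mass_k N p t vx vy vz) X a b
   = integral ref_wedge (\<lambda>(r, s, u). ell N p t a r s u * Jac vx vy vz r s u
        * (\<Sum>c<Np N * (N + 1). ell N p t c r s u * X c b))"
proof -
  let ?f = "\<lambda>c (r, s, u). ell N p t a r s u * ell N p t c r s u * Jac vx vy vz r s u * X c b"
  have "?f c integrable_on ref_wedge" for c
    unfolding case_prod_beta' ell_def
    by (intro integrable_on_compact_continuous[OF compact_ref_wedge] continuous_intros)
  then have "(\<Sum>c<Np N * (N + 1). integral ref_wedge (?f c))
      = integral ref_wedge (\<lambda>x. \<Sum>c<Np N * (N + 1). ?f c x)"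
    by (intro integral_sum[symmetric]) auto
  then show ?thesis
    by (simp add: mmul_def mass_k_def case_prod_beta' sum_distrib_left mult_ac)
qed

lemma integral_ref_tri_mmul_mass_tri_k:
  "integral ref_tri (\<lambda>x. lagr_tri N p i x * Jac vx vy vz (fst x) (snd x) 0
      * (\<Sum>k<Np N. lagr_tri N p k x * L k i'))
   = mmul (Np N) (mass_tri_k N p vx vy vz) L i i'"
proof -
  let ?f = "\<lambda>k x. lagr_tri N p i x * lagr_tri N p k x * Jac vx vy vz (fst x) (snd x) 0 * L k i'"
  have "?f k integrable_on ref_tri" for k
    by (intro integrable_on_compact_continuous[OF compact_ref_tri] continuous_intros)
  then have "integral ref_tri (\<lambda>x. \<Sum>k<Np N. ?f k x) = (\<Sum>k<Np N. integral ref_tri (?f k))"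
    by (intro integral_sum) auto
  then show ?thesis
    by (simp add: mmul_def mass_tri_k_def case_prod_beta' sum_distrib_left mult_ac)
qed

lemma mass_k_mmul_wedge_diff_mat_entry:
  assumes g: "\<And>u. g u = \<alpha> + \<beta> * u" and j: "j \<le> N" and j': "j' \<le> N"
  shows "mmul (Np N * (N + 1)) (mass_k N p t vx vy vz) (wedge_diff_mat N p t rx sx g L)
      (i * (N + 1) + j) (i' * (N + 1) + j')
    = horizontal_entry rx sx i j i' j'
      + mmul (Np N) (mass_tri_k N p vx vy vz) L i i'
        * integral {0..1} (\<lambda>u. lagr_1d N t j u * (g u * deriv (lagr_1d N t j') u))"
proof -
  define H where "H = (\<lambda>(r, s, u). lagr_tri N p i (r, s) * lagr_1d N t j u * Jac vx vy vz r s u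
     * (rx * lagr_tri_dr N p i' (r, s) + sx * lagr_tri_ds N p i' (r, s)) * lagr_1d N t j' u)"
  define C where "C = (\<lambda>x. lagr_tri N p i x * Jac vx vy vz (fst x) (snd x) 0
      * (\<Sum>k<Np N. lagr_tri N p k x * L k i'))"
  define D where "D = (\<lambda>u. lagr_1d N t j u * (g u * deriv (lagr_1d N t j') u))"
  have "j < N + 1" using j by simp
  have pointwise: "ell N p t (i * (N + 1) + j) r s u * Jac vx vy vz r s u
      * (\<Sum>c<Np N * (N + 1). ell N p t c r s u * wedge_diff_mat N p t rx sx g L c (i' * (N + 1) + j'))
    = H (r, s, u) + C (r, s) * D u" for r s u
  proof -
    have "Jac vx vy vz r s u = Jac vx vy vz r s 0" by (rule Jac_eq_Jac_0)
    then show ?thesis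
      unfolding sum_ell_wedge_diff_mat[OF unisolvent inj_on_gll N_ge_1 g j']
      unfolding ell_def flat_index_div_mod[OF \<open>j < N + 1\<close>]
      by (simp add: H_def C_def D_def algebra_simps)
  qed
  have "mmul (Np N * (N + 1)) (mass_k N p t vx vy vz) (wedge_diff_mat N p t rx sx g L)
      (i * (N + 1) + j) (i' * (N + 1) + j')
      = integral ref_wedge (\<lambda>x. H x + (\<lambda>(r, s, u). C (r, s) * D u) x)"
    unfolding mmul_mass_k by (rule integral_cong, clarify, simp only: prod.case pointwise)
  also have "\<dots> = integral ref_wedge H + integral ref_wedge (\<lambda>(r, s, u). C (r, s) * D u)"
    unfolding H_def C_def D_def g case_prod_beta'
    by (intro integral_add integrable_on_compact_continuous[OF compact_ref_wedge] continuous_intros)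
  also have "integral ref_wedge (\<lambda>(r, s, u). C (r, s) * D u) = integral ref_tri C * integral {0..1} D"
    by (rule integral_ref_wedge_tensor; unfold C_def D_def g; intro continuous_intros)
  also have "integral ref_tri C = mmul (Np N) (mass_tri_k N p vx vy vz) L i i'"
    unfolding C_def by (rule integral_ref_tri_mmul_mass_tri_k)
  finally show ?thesis by (simp add: horizontal_entry_def H_def D_def)
qed


lemma weak_diff_mat_eq_mmul_mass_k:
  assumes G: "\<And>r s u. (r, s, u) \<in> ref_wedge
      \<Longrightarrow> Gr r s u = rx \<and> Gs r s u = sx \<and> Gt r s u * Jac vx vy vz r s u = g u"
    and g: "\<And>u. g u = \<alpha> + \<beta> * u"
    and a: "a < Np N * (N + 1)" and b: "b < Np N * (N + 1)"
  defines "L \<equiv> mmul (Np N) (minv (Np N) (mass_tri_k N p vx vy vz)) (mass_tri_ref N p)"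
  shows "weak_diff_mat N p t vx vy vz Gr Gs Gt a b
    = mmul (Np N * (N + 1)) (mass_k N p t vx vy vz) (wedge_diff_mat N p t rx sx g L) a b"
proof -
  let ?q = "N + 1"
  define i where "i = a div ?q"
  define j where "j = a mod ?q"
  define i' where "i' = b div ?q"
  define j' where "j' = b mod ?q"
  have ab: "a = i * ?q + j" "b = i' * ?q + j'"
    unfolding i_def j_def i'_def j'_def by (simp_all only: div_mult_mod_eq)
  have "i < Np N" "j \<le> N" "j' \<le> N"
    using a by (simp_all add: i_def j_def j'_def less_mult_imp_div_less)
  moreover from \<open>i < Np N\<close> have "mmul (Np N) (mass_tri_k N p vx vy vz) L i i' = mass_tri_ref N p i i'"
    unfolding L_def mmul_assoc by (rule mmul_is_minv_right[OF is_minv_mass_tri_k])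
  ultimately show ?thesis
    unfolding ab using weak_diff_mat_entry[OF G g] mass_k_mmul_wedge_diff_mat_entry[OF g] by simp
qed

lemma minv_mass_k_mmul_weak_diff_mat:
  assumes G: "\<And>r s u. (r, s, u) \<in> ref_wedge
      \<Longrightarrow> Gr r s u = rx \<and> Gs r s u = sx \<and> Gt r s u * Jac vx vy vz r s u = g u"
    and g: "\<And>u. g u = \<alpha> + \<beta> * u"
    and a: "a < Np N * (N + 1)" and b: "b < Np N * (N + 1)"
  defines "L \<equiv> mmul (Np N) (minv (Np N) (mass_tri_k N p vx vy vz)) (mass_tri_ref N p)"
  shows "mmul (Np N * (N + 1)) (minv (Np N * (N + 1)) (mass_k N p t vx vy vz))
      (weak_diff_mat N p t vx vy vz Gr Gs Gt) a b = wedge_diff_mat N p t rx sx g L a b"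
proof -
  let ?n = "Np N * (N + 1)" and ?M = "mass_k N p t vx vy vz" and ?X = "wedge_diff_mat N p t rx sx g L"
  have "mmul ?n (minv ?n ?M) (weak_diff_mat N p t vx vy vz Gr Gs Gt) a b
      = mmul ?n (minv ?n ?M) (mmul ?n ?M ?X) a b"
    unfolding mmul_def[of ?n "minv ?n ?M"] L_def
    by (intro sum.cong refl arg_cong2[where f=times] weak_diff_mat_eq_mmul_mass_k[OF G g _ b]) auto
  also have "\<dots> = mmul ?n (mmul ?n (minv ?n ?M) ?M) ?X a b" by (rule mmul_assoc)
  also have "\<dots> = ?X a b" by (rule mmul_is_minv_left[OF is_minv_mass_k a])
  finally show ?thesis .
qed

end

theorem mainTheorem5:
  fixes N :: nat and p :: "nat \<Rightarrow> real \<times> real" and t :: "nat \<Rightarrow> real"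
    and vx vy vz :: "nat \<Rightarrow> real"
  assumes "1 \<le> N"
    and "\<forall>i<Np N. p i \<in> ref_tri"
    and "unisolvent N p"
    and "gll_nodes N t"
    and "vertically_mapped vx vy"
    and "\<forall>(r, s, u)\<in>ref_wedge. Jac vx vy vz r s u > 0"
  shows "\<exists>rx sx ry sy :: real. \<exists>gx gy :: real \<Rightarrow> real.
    (\<forall>(r, s, u)\<in>ref_wedge.
        geo_rx vx vy vz r s u = rx \<and> geo_sx vx vy vz r s u = sx
      \<and> geo_ry vx vy vz r s u = ry \<and> geo_sy vx vy vz r s u = sy
      \<and> geo_tx vx vy vz r s u * Jac vx vy vz r s u = gx u
      \<and> geo_ty vx vy vz r s u * Jac vx vy vz r s u = gy u)
    \<and> (let n = Np N * (N + 1);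
           M = mass_k N p t vx vy vz;
           L = mmul (Np N) (minv (Np N) (mass_tri_k N p vx vy vz)) (mass_tri_ref N p);
           Dx = mmul n (minv n M) (Sx_k N p t vx vy vz);
           Dy = mmul n (minv n M) (Sy_k N p t vx vy vz)
       in (\<forall>a<n. \<forall>b<n.
             Dx a b = kron (N + 1) (\<lambda>i i'. rx * Dr_tri N p i i' + sx * Ds_tri N p i i') idm a b
                    + kron (N + 1) L (mmul (N + 1) (diagm (\<lambda>j. gx (t j))) (Dt_1d N t)) a b)
        \<and> (\<forall>a<n. \<forall>b<n.
             Dy a b = kron (N + 1) (\<lambda>i i'. ry * Dr_tri N p i i' + sy * Ds_tri N p i i') idm a b
                    + kron (N + 1) L (mmul (N + 1) (diagm (\<lambda>j. gy (t j))) (Dt_1d N t)) a b))"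
proof -
  interpret nodal_wedge N p t vx vy vz
    using assms by unfold_locales
  obtain rx sx ry sy gx gy where geo: "\<And>r s u. (r, s, u) \<in> ref_wedge \<Longrightarrow>
      geo_rx vx vy vz r s u = rx \<and> geo_sx vx vy vz r s u = sx
      \<and> geo_ry vx vy vz r s u = ry \<and> geo_sy vx vy vz r s u = sy
      \<and> geo_tx vx vy vz r s u * Jac vx vy vz r s u = gx u
      \<and> geo_ty vx vy vz r s u * Jac vx vy vz r s u = gy u"
    and gx: "\<And>u. gx u = gx 0 + (gx 1 - gx 0) * u" and gy: "\<And>u. gy u = gy 0 + (gy 1 - gy 0) * u"
    using geo_factors_affine by blast
  let ?n = "Np N * (N + 1)" and ?M = "mass_k N p t vx vy vz"
    and ?L = "mmul (Np N) (minv (Np N) (mass_tri_k N p vx vy vz)) (mass_tri_ref N p)"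
  have Dx: "mmul ?n (minv ?n ?M) (Sx_k N p t vx vy vz) a b = wedge_diff_mat N p t rx sx gx ?L a b"
    if "a < ?n" "b < ?n" for a b
    unfolding Sx_k_eq_weak_diff_mat
    by (rule minv_mass_k_mmul_weak_diff_mat[OF _ gx that]) (use geo in blast)
  have Dy: "mmul ?n (minv ?n ?M) (Sy_k N p t vx vy vz) a b = wedge_diff_mat N p t ry sy gy ?L a b"
    if "a < ?n" "b < ?n" for a b
    unfolding Sy_k_eq_weak_diff_mat
    by (rule minv_mass_k_mmul_weak_diff_mat[OF _ gy that]) (use geo in blast)
  show ?thesis
    unfolding Let_def wedge_diff_mat_def[symmetric]
    by (rule exI[of _ rx], rule exI[of _ sx], rule exI[of _ ry], rule exI[of _ sy],
        rule exI[of _ gx], rule exI[of _ gy]) (use geo Dx Dy in blast)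
qed

end
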